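(* Assume that $\mathbf{B}$ is regular (invertible). Let $\boldsymbol{\alpha},\boldsymbol{\beta}\in\triangle_q$ and $\boldsymbol{\gamma},\boldsymbol{\delta}\in\mathbb{R}^{q\times q}_{\geq0}$ satisfy $\sum_i\gamma_{ik}=\alpha_k$, $\sum_k\gamma_{ik}=\alpha_i$, $\sum_j\delta_{jl}=\beta_l$, $\sum_l\delta_{jl}=\beta_j$, and suppose that $(\boldsymbol{\alpha},\boldsymbol{\beta},\boldsymbol{\gamma},\boldsymbol{\delta})$ achieves equality in \[\max_{\boldsymbol{\alpha},\boldsymbol{\beta}}\ \max_{\boldsymbol{\gamma},\boldsymbol{\delta}\text{ satisfying the constraints}}\Psi_1^{\mathbf{B}\otimes\mathbf{B}}(\boldsymbol{\gamma},\boldsymbol{\delta})=2\max_{\boldsymbol{\alpha},\boldsymbol{\beta}}\Psi_1^{\mathbf{B}}(\boldsymbol{\alpha},\boldsymbol{\beta}),\] i.e. $\Psi_1^{\mathbf{B}\otimes\mathbf{B}}(\boldsymbol{\gamma},\boldsymbol{\delta})=2\max_{\boldsymbol{\alpha}',\boldsymbol{\beta}'}\Psi_1^{\mathbf{B}}(\boldsymbol{\alpha}',\boldsymbol{\beta}')$. Then $\gamma_{ik}=\alpha_i\alpha_k$ and $\delta_{jl}=\beta_j\beta_l$ for all $i,j,k,l\in[q]$.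
   Context: $\mathbf{B}$ is a symmetric $q\times q$ nonnegative matrix (irreducible, standing assumption), $\Delta\geq3$, $\triangle_q$ the probability simplex. For a symmetric nonnegative $m\times m$ matrix $\mathbf{A}$ and probability vectors $\mathbf{a},\mathbf{b}\in\triangle_m$, $\Psi_1^{\mathbf{A}}(\mathbf{a},\mathbf{b})=\max_{\mathbf{x}}[(\Delta-1)(\sum_ia_i\ln a_i+\sum_jb_j\ln b_j)+\Delta\sum_{i,j}x_{ij}(\ln A_{ij}-\ln x_{ij})]$ over nonnegative $\mathbf{x}\in\mathbb{R}^{m\times m}$ with row sums $a_i$ and column sums $b_j$ (conventions $\ln0=-\infty$, $0\ln0=0$). For $\mathbf{B}\otimes\mathbf{B}$ ($q^2$ spins indexed by pairs $(i,k)$, entry $B_{ij}B_{kl}$ between $(i,k)$ and $(j,l)$), $\boldsymbol{\gamma},\boldsymbol{\delta}$ are regarded as probability vectors indexed by pairs. *)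

theory Defs
  imports "HOL-Analysis.Analysis" "HOL-Library.Extended_Real"
begin

definition prob_simplex :: "('a::finite \<Rightarrow> real) \<Rightarrow> bool" where
  "prob_simplex a \<longleftrightarrow> (\<forall>i. a i \<ge> 0) \<and> (\<Sum>i\<in>UNIV. a i) = 1"

definition sym_nonneg_mat :: "('a::finite \<Rightarrow> 'a \<Rightarrow> real) \<Rightarrow> bool" where
  "sym_nonneg_mat A \<longleftrightarrow> (\<forall>i j. A i j = A j i) \<and> (\<forall>i j. A i j \<ge> 0)"

definition irreducible_mat :: "('a::finite \<Rightarrow> 'a \<Rightarrow> real) \<Rightarrow> bool" where
  "irreducible_mat A \<longleftrightarrow> (\<forall>i j. (i, j) \<in> {(u, v). A u v > 0}\<^sup>+)"

definition regular_mat :: "('a::finite \<Rightarrow> 'a \<Rightarrow> real) \<Rightarrow> bool" where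
  "regular_mat A \<longleftrightarrow> (\<exists>C. (\<forall>i k. (\<Sum>j\<in>UNIV. A i j * C j k) = (if i = k then 1 else 0))
                          \<and> (\<forall>i k. (\<Sum>j\<in>UNIV. C i j * A j k) = (if i = k then 1 else 0)))"

definition kron :: "('a \<Rightarrow> 'a \<Rightarrow> real) \<Rightarrow> ('b \<Rightarrow> 'b \<Rightarrow> real) \<Rightarrow> ('a \<times> 'b) \<Rightarrow> ('a \<times> 'b) \<Rightarrow> real" where
  "kron A C = (\<lambda>(i, k) (j, l). A i j * C k l)"

definition xlnx :: "real \<Rightarrow> real" where
  "xlnx t = (if t = 0 then 0 else t * ln t)"

text \<open>The term x (ln A - ln x) with conventions ln 0 = -infinity and 0 ln 0 = 0
  (so the term is 0 when x = 0 and -infinity when x > 0 and A = 0).\<close>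
definition cross_term :: "real \<Rightarrow> real \<Rightarrow> ereal" where
  "cross_term a x = (if x = 0 then 0 else if a = 0 then -\<infinity> else ereal (x * (ln a - ln x)))"

definition couplings :: "('a::finite \<Rightarrow> real) \<Rightarrow> ('a \<Rightarrow> real) \<Rightarrow> ('a \<Rightarrow> 'a \<Rightarrow> real) set" where
  "couplings a b = {x. (\<forall>i j. x i j \<ge> 0) \<and> (\<forall>i. (\<Sum>j\<in>UNIV. x i j) = a i) \<and> (\<forall>j. (\<Sum>i\<in>UNIV. x i j) = b j)}"

definition Psi1_obj :: "nat \<Rightarrow> ('a::finite \<Rightarrow> 'a \<Rightarrow> real) \<Rightarrow> ('a \<Rightarrow> real) \<Rightarrow> ('a \<Rightarrow> real) \<Rightarrow> ('a \<Rightarrow> 'a \<Rightarrow> real) \<Rightarrow> ereal" where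
  "Psi1_obj \<Delta> A a b x =
     ereal ((real \<Delta> - 1) * ((\<Sum>i\<in>UNIV. xlnx (a i)) + (\<Sum>j\<in>UNIV. xlnx (b j))))
     + ereal (real \<Delta>) * (\<Sum>(i, j)\<in>UNIV. cross_term (A i j) (x i j))"

text \<open>Psi_1^A(a,b): the maximum (supremum; it is attained) of the objective over couplings.\<close>
definition Psi1 :: "nat \<Rightarrow> ('a::finite \<Rightarrow> 'a \<Rightarrow> real) \<Rightarrow> ('a \<Rightarrow> real) \<Rightarrow> ('a \<Rightarrow> real) \<Rightarrow> ereal" where
  "Psi1 \<Delta> A a b = (SUP x\<in>couplings a b. Psi1_obj \<Delta> A a b x)"

end

theory Submission
  imports Defs
begin

text \<open>Put \<open>t = (\<Delta> - 1) / \<Delta>\<close> and \<open>S(A, a, b) = \<Sum>i j. A i j * a i powr t * b j powr t\<close>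
  (\<open>powr_form t A a b\<close> below).
  Gibbs' inequality bounds \<open>\<Psi>\<^sub>1(A, a, b)\<close> by \<open>\<Delta> * ln S(A, a, b)\<close>, and at a maximizer of
  \<open>S(B, -, -)\<close> over pairs of distributions the tilted coupling attains this bound, because
  maximizers are fixed points of a best-response map. Hence with \<open>N = max S(B, -, -)\<close> the
  hypothesis forces \<open>S(B \<otimes> B, \<gamma>, \<delta>) \<ge> N\<^sup>2\<close>. Splitting the tensor form along the second
  coordinates and bounding each piece by homogeneity shows \<open>S(B, \<alpha>, \<beta>) = N\<close>, and that
  the normalised slices \<open>\<gamma>(-, k) / \<alpha> k\<close> and \<open>\<delta>(-, l) / \<beta> l\<close> form a maximizing pair whenever
  \<open>B k l > 0\<close>, so these slices are best responses to each other. As \<open>t > 1/2\<close>, a maximizer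
  cannot be split into two decoupled blocks; hence all slices coincide, and the row marginals
  identify the common slice as \<open>\<alpha>\<close> (resp. \<open>\<beta>\<close>).\<close>

lemma powr_weighted_mean_le:
  fixes x y t :: real
  assumes "0 < t" "t < 1" "0 \<le> x" "0 \<le> y"
  shows "x powr t * y powr (1 - t) \<le> t * x + (1 - t) * y"
  using assms Youngs_inequality_0[of t "1 - t" x y] by (cases "x = 0 \<or> y = 0") auto

lemma powr_weighted_mean_eq_imp_eq:
  fixes x y t :: real
  assumes t: "0 < t" "t < 1" and "0 \<le> x" "0 \<le> y"
    and eq: "x powr t * y powr (1 - t) = t * x + (1 - t) * y"
  shows "x = y"
proof (cases "x = 0 \<or> y = 0")
  case True
  then show ?thesis using assms by auto
next
  case False
  with assms have "0 < x" "0 < y" by auto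
  define m where "m = x powr t * y powr (1 - t)"
  have m: "0 < m" unfolding m_def using \<open>0 < x\<close> \<open>0 < y\<close> by simp
  text \<open>Normalised by the geometric mean, the logarithms average to 0 and the values to 1,
    so the tangent inequality \<open>ln z \<le> z - 1\<close> must be tight at both points.\<close>
  have ln_avg: "t * ln (x / m) + (1 - t) * ln (y / m) = 0"
    using \<open>0 < x\<close> \<open>0 < y\<close> m by (simp add: m_def ln_div ln_mult ln_powr algebra_simps)
  have "t * x + (1 - t) * y = m" using eq by (simp add: m_def)
  then have avg: "t * (x / m) + (1 - t) * (y / m) = 1"
    using m by (simp add: field_simps)
  have gx: "ln (x / m) \<le> x / m - 1" and gy: "ln (y / m) \<le> y / m - 1"
    using \<open>0 < x\<close> \<open>0 < y\<close> m by (simp_all add: ln_le_minus_one)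
  define p where "p = ln (x / m) - (x / m - 1)"
  define q where "q = ln (y / m) - (y / m - 1)"
  have "p \<le> 0" "q \<le> 0" using gx gy by (simp_all add: p_def q_def)
  moreover have "t * p + (1 - t) * q = 0"
    using ln_avg avg by (simp add: p_def q_def algebra_simps)
  ultimately have "t * p = 0" "(1 - t) * q = 0"
    using t mult_nonneg_nonpos[of t p] mult_nonneg_nonpos[of "1 - t" q] by linarith+
  then have "ln (x / m) = x / m - 1" "ln (y / m) = y / m - 1"
    using t by (simp_all add: p_def q_def)
  moreover have "0 < x / m" "0 < y / m" using \<open>0 < x\<close> \<open>0 < y\<close> m by simp_all
  ultimately have "x / m = 1" "y / m = 1" using ln_eq_minus_one by blast+
  then show ?thesis by simp
qed

lemma gibbs_inequality:
  fixes x y :: "'i \<Rightarrow> real"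
  assumes "finite I" and x: "\<And>i. i \<in> I \<Longrightarrow> 0 \<le> x i" and y: "\<And>i. i \<in> I \<Longrightarrow> 0 \<le> y i"
    and mass: "sum x I = 1" and supp: "\<And>i. i \<in> I \<Longrightarrow> 0 < x i \<Longrightarrow> 0 < y i"
  shows "0 < sum y I" and "(\<Sum>i\<in>I. x i * (ln (y i) - ln (x i))) \<le> ln (sum y I)"
proof -
  obtain i0 where "i0 \<in> I" "x i0 \<noteq> 0" using mass by (metis sum.neutral zero_neq_one)
  then have "0 < y i0" using x supp by force
  moreover have "y i0 \<le> sum y I" using \<open>finite I\<close> \<open>i0 \<in> I\<close> y by (intro member_le_sum) auto
  ultimately show pos: "0 < sum y I" by linarith
  define S where "S = sum y I"
  have termwise: "x i * (ln (y i) - ln (x i)) \<le> ln S * x i + y i / S - x i" if "i \<in> I" for i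
  proof (cases "x i = 0")
    case True
    then show ?thesis using y[OF that] pos by (simp add: S_def)
  next
    case False
    then have "0 < x i" "0 < y i" using x supp that by force+
    then have "ln (y i / (x i * S)) \<le> y i / (x i * S) - 1"
      using pos by (intro ln_le_minus_one) (simp add: S_def)
    then have "x i * ln (y i / (x i * S)) \<le> x i * (y i / (x i * S) - 1)"
      using \<open>0 < x i\<close> by (intro mult_left_mono) simp_all
    also have "\<dots> = y i / S - x i"
      using \<open>0 < x i\<close> by (simp add: right_diff_distrib)
    finally have "x i * ln (y i / (x i * S)) \<le> y i / S - x i" .
    moreover have log_split: "ln (y i / (x i * S)) = ln (y i) - ln (x i) - ln S"
      using \<open>0 < x i\<close> \<open>0 < y i\<close> pos by (simp add: S_def ln_div ln_mult)
    have "x i * (ln (y i) - ln (x i)) = x i * ln (y i / (x i * S)) + ln S * x i"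
      unfolding log_split by (simp add: algebra_simps)
    ultimately show ?thesis by linarith
  qed
  have "(\<Sum>i\<in>I. x i * (ln (y i) - ln (x i))) \<le> (\<Sum>i\<in>I. ln S * x i + y i / S - x i)"
    by (rule sum_mono) (rule termwise)
  also have "\<dots> = ln S * sum x I + sum y I / S - sum x I"
    by (simp add: sum.distrib sum_subtractf sum_distrib_left sum_divide_distrib)
  also have "\<dots> = ln S" using mass pos by (simp add: S_def)
  finally show "(\<Sum>i\<in>I. x i * (ln (y i) - ln (x i))) \<le> ln (sum y I)" by (simp add: S_def)
qed

lemma powr_split_ge_one_imp_one:
  fixes t w w' :: real
  assumes t: "1/2 < t" "t < 1" and w: "0 < w" "w \<le> 1" and w': "0 \<le> w'" "w' \<le> 1"
    and ge: "1 \<le> (w * w') powr t + ((1 - w) * (1 - w')) powr t"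
  shows "w = 1 \<and> w' = 1"
proof -
  define x y where "x = w * w'" and "y = (1 - w) * (1 - w')"
  have x: "0 \<le> x" "x \<le> 1" and y: "0 \<le> y" "y \<le> 1"
    using w w' by (auto simp: x_def y_def intro: mult_le_one)
  have root: "z powr t \<le> sqrt z" if "0 \<le> z" "z \<le> 1" for z
    using that t powr_mono'[of "1/2" t z] by (simp add: powr_half_sqrt)
  text \<open>Since \<open>t > 1/2\<close>, the sum is at most \<open>sqrt x + sqrt y \<le> 1\<close>, strictly so if \<open>0 < x < 1\<close>.\<close>
  have "sqrt x + sqrt y \<le> 1"
    using arith_geo_mean_sqrt[of w w'] arith_geo_mean_sqrt[of "1 - w" "1 - w'"] w w'
    by (simp add: x_def y_def)
  have "x = 0 \<or> x = 1"
  proof (rule ccontr)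
    assume "\<not> (x = 0 \<or> x = 1)"
    then have "x powr t < sqrt x"
      using x t powr_less_mono'[of x "1/2" t] by (simp add: powr_half_sqrt)
    then show False
      using root[OF y] ge \<open>sqrt x + sqrt y \<le> 1\<close> by (simp add: x_def y_def)
  qed
  then show ?thesis
  proof
    assume "x = 0"
    then have "w' = 0" using w by (simp add: x_def)
    then have "1 \<le> (1 - w) powr t" using ge by simp
    moreover have "(1 - w) powr t < 1"
      using w t powr_less_mono2[of t "1 - w" 1] by (cases "w = 1") auto
    ultimately show ?thesis by simp
  next
    assume "x = 1"
    moreover have "x \<le> w" "x \<le> w'"
      using w w' mult_left_le[of w' w] mult_right_le_one_le[of w' w] by (simp_all add: x_def mult.commute)
    ultimately show ?thesis using w w' by simp
  qed
qed

lemma sum_UNIV_prod: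
  "(\<Sum>p\<in>UNIV. f p) = (\<Sum>i\<in>UNIV. \<Sum>k\<in>UNIV. f (i, k))" for f :: "'a::finite \<times> 'b::finite \<Rightarrow> 'c::comm_monoid_add"
  by (simp add: sum.cartesian_product)

section \<open>The power form\<close>

definition powr_form :: "real \<Rightarrow> ('a::finite \<Rightarrow> 'a \<Rightarrow> real) \<Rightarrow> ('a \<Rightarrow> real) \<Rightarrow> ('a \<Rightarrow> real) \<Rightarrow> real" where
  "powr_form t A a b = (\<Sum>i\<in>UNIV. \<Sum>j\<in>UNIV. A i j * a i powr t * b j powr t)"

definition powr_form_bounded :: "real \<Rightarrow> ('a::finite \<Rightarrow> 'a \<Rightarrow> real) \<Rightarrow> real \<Rightarrow> bool" where
  "powr_form_bounded t A N \<longleftrightarrow> (\<forall>a b. prob_simplex a \<longrightarrow> prob_simplex b \<longrightarrow> powr_form t A a b \<le> N)"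

lemma powr_form_pairs: "powr_form t A a b = (\<Sum>(i, j)\<in>UNIV. A i j * a i powr t * b j powr t)"
  unfolding powr_form_def by (simp add: sum.cartesian_product)

lemma powr_form_rows: "powr_form t A a b = (\<Sum>i\<in>UNIV. a i powr t * (\<Sum>j\<in>UNIV. A i j * b j powr t))"
  unfolding powr_form_def by (simp add: sum_distrib_left mult_ac)

lemma powr_form_commute:
  assumes "\<And>i j. B i j = B j i"
  shows "powr_form t B a b = powr_form t B b a"
  unfolding powr_form_def by (subst sum.swap) (simp add: assms mult_ac)

lemma powr_form_scale:
  assumes "0 \<le> c" "0 \<le> d" "\<And>i. 0 \<le> a i" "\<And>j. 0 \<le> b j"
  shows "powr_form t A (\<lambda>i. c * a i) (\<lambda>j. d * b j) = c powr t * d powr t * powr_form t A a b"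
  unfolding powr_form_def sum_distrib_left
  using assms by (intro sum.cong refl) (simp add: powr_mult mult_ac)

lemma powr_form_unit_vectors:
  "powr_form t A (\<lambda>i. if i = u then 1 else 0) (\<lambda>j. if j = v then 1 else 0) = A u v"
proof -
  have "A i j * (if i = u then 1 else 0) powr t * (if j = v then 1 else 0) powr t
        = (if j = v then if i = u then A u v else 0 else 0)" for i j
    by (cases "i = u"; cases "j = v") simp_all
  then show ?thesis unfolding powr_form_def by simp
qed

lemma powr_form_kron:
  "powr_form t (kron A C) \<gamma> \<delta>
     = (\<Sum>k\<in>UNIV. \<Sum>l\<in>UNIV. C k l * powr_form t A (\<lambda>i. \<gamma> (i, k)) (\<lambda>j. \<delta> (j, l)))"
proof -
  let ?F = "\<lambda>i k j l. C k l * (A i j * \<gamma> (i, k) powr t * \<delta> (j, l) powr t)"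
  have "powr_form t (kron A C) \<gamma> \<delta> = (\<Sum>i\<in>UNIV. \<Sum>k\<in>UNIV. \<Sum>j\<in>UNIV. \<Sum>l\<in>UNIV. ?F i k j l)"
    unfolding powr_form_def sum_UNIV_prod by (simp add: kron_def mult_ac)
  also have "\<dots> = (\<Sum>k\<in>UNIV. \<Sum>i\<in>UNIV. \<Sum>j\<in>UNIV. \<Sum>l\<in>UNIV. ?F i k j l)"
    by (rule sum.swap)
  also have "\<dots> = (\<Sum>k\<in>UNIV. \<Sum>i\<in>UNIV. \<Sum>l\<in>UNIV. \<Sum>j\<in>UNIV. ?F i k j l)"
    by (intro sum.cong refl sum.swap)
  also have "\<dots> = (\<Sum>k\<in>UNIV. \<Sum>l\<in>UNIV. \<Sum>i\<in>UNIV. \<Sum>j\<in>UNIV. ?F i k j l)"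
    by (intro sum.cong refl sum.swap)
  also have "\<dots> = (\<Sum>k\<in>UNIV. \<Sum>l\<in>UNIV. C k l * powr_form t A (\<lambda>i. \<gamma> (i, k)) (\<lambda>j. \<delta> (j, l)))"
    unfolding powr_form_def by (simp add: sum_distrib_left)
  finally show ?thesis .
qed

lemma powr_form_le_mass:
  assumes N: "powr_form_bounded t A N" and a: "\<And>i. 0 \<le> a i" and b: "\<And>j. 0 \<le> b j"
  shows "powr_form t A a b \<le> N * sum a UNIV powr t * sum b UNIV powr t"
proof (cases "sum a UNIV = 0 \<or> sum b UNIV = 0")
  case True
  then have "a = (\<lambda>_. 0) \<or> b = (\<lambda>_. 0)" using a b by (auto simp: sum_nonneg_eq_0_iff)
  then show ?thesis using True by (auto simp: powr_form_def)
next
  case False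
  define wa wb where "wa = sum a UNIV" and "wb = sum b UNIV"
  have pos: "0 < wa" "0 < wb"
    using False a b by (auto simp: wa_def wb_def order_less_le sum_nonneg)
  have "prob_simplex (\<lambda>i. a i / wa)" "prob_simplex (\<lambda>j. b j / wb)"
    using pos a b by (auto simp: prob_simplex_def wa_def wb_def simp flip: sum_divide_distrib)
  then have "powr_form t A (\<lambda>i. a i / wa) (\<lambda>j. b j / wb) \<le> N"
    using N unfolding powr_form_bounded_def by blast
  moreover have "powr_form t A a b = wa powr t * wb powr t * powr_form t A (\<lambda>i. a i / wa) (\<lambda>j. b j / wb)"
    using powr_form_scale[of wa wb "\<lambda>i. a i / wa" "\<lambda>j. b j / wb" t A] pos a b by simp
  ultimately have "powr_form t A a b \<le> wa powr t * wb powr t * N"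
    by (simp add: mult_left_mono)
  then show ?thesis by (simp add: wa_def wb_def mult_ac)
qed

lemma compact_cart_simplex: "compact {x :: real^'n. (\<forall>i. 0 \<le> x $ i) \<and> (\<Sum>i\<in>UNIV. x $ i) = 1}"
  (is "compact ?S")
proof -
  have "closed ?S"
    by (intro closed_Collect_conj closed_Collect_all closed_Collect_le closed_Collect_eq
        continuous_intros)
  moreover have "norm x \<le> 1" if "x \<in> ?S" for x
    using norm_le_l1_cart[of x] that by simp
  then have "bounded ?S" by (auto simp: bounded_iff)
  ultimately show ?thesis by (simp add: compact_eq_bounded_closed)
qed

lemma powr_form_simplex_maximum:
  fixes A :: "'a::finite \<Rightarrow> 'a \<Rightarrow> real"
  assumes "0 < t"
  shows "\<exists>a b. prob_simplex a \<and> prob_simplex b \<and> powr_form_bounded t A (powr_form t A a b)"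
proof -
  define S :: "(real^'a) set" where "S = {x. (\<forall>i. 0 \<le> x $ i) \<and> (\<Sum>i\<in>UNIV. x $ i) = 1}"
  have S: "x \<in> S \<longleftrightarrow> prob_simplex (vec_nth x)" for x
    by (simp add: S_def prob_simplex_def)
  define f where "f z = powr_form t A (vec_nth (fst z)) (vec_nth (snd z))" for z :: "(real^'a) \<times> (real^'a)"
  have "(\<chi> i. 1 / real CARD('a)) \<in> S" by (simp add: S_def)
  then have nonempty: "S \<times> S \<noteq> {}" by blast
  have compact: "compact (S \<times> S)"
    unfolding S_def by (intro compact_Times compact_cart_simplex)
  have cont: "continuous_on (S \<times> S) f"
    unfolding f_def powr_form_def using assms
    by (intro continuous_on_sum continuous_on_mult continuous_on_const continuous_on_powr'
        continuous_on_component continuous_on_fst continuous_on_snd continuous_on_id)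
      (auto simp: S_def)
  obtain z where z: "z \<in> S \<times> S" and max: "\<And>y. y \<in> S \<times> S \<Longrightarrow> f y \<le> f z"
    using continuous_attains_sup[OF compact nonempty cont] by blast
  show ?thesis
  proof (intro exI conjI)
    show "prob_simplex (vec_nth (fst z))" "prob_simplex (vec_nth (snd z))"
      using z by (simp_all add: S mem_Times_iff)
    show "powr_form_bounded t A (powr_form t A (vec_nth (fst z)) (vec_nth (snd z)))"
      unfolding powr_form_bounded_def
    proof (intro allI impI)
      fix a b :: "'a \<Rightarrow> real"
      assume "prob_simplex a" "prob_simplex b"
      have vec: "vec_nth (vec_lambda c) = c" for c :: "'a \<Rightarrow> real" by (simp add: fun_eq_iff)
      with \<open>prob_simplex a\<close> \<open>prob_simplex b\<close> have "(vec_lambda a, vec_lambda b) \<in> S \<times> S"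
        by (simp add: S)
      then show "powr_form t A a b \<le> powr_form t A (vec_nth (fst z)) (vec_nth (snd z))"
        using max[of "(vec_lambda a, vec_lambda b)"] by (simp add: f_def vec)
    qed
  qed
qed

section \<open>Maximizers as best responses\<close>

definition best_response :: "real \<Rightarrow> ('a::finite \<Rightarrow> 'a \<Rightarrow> real) \<Rightarrow> real \<Rightarrow> ('a \<Rightarrow> real) \<Rightarrow> 'a \<Rightarrow> real" where
  "best_response t A N b i = ((\<Sum>j\<in>UNIV. A i j * b j powr t) / N) powr (1 / (1 - t))"

lemma best_response_powr:
  assumes "t < 1" "0 < N" "\<And>i j. 0 \<le> A i j"
  shows "best_response t A N b i powr (1 - t) = (\<Sum>j\<in>UNIV. A i j * b j powr t) / N"
proof -
  have "0 \<le> (\<Sum>j\<in>UNIV. A i j * b j powr t)" using assms by (simp add: sum_nonneg)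
  then show ?thesis using assms(1,2) by (simp add: best_response_def powr_powr)
qed

lemma best_response_row_sum:
  assumes "0 < t" "t < 1" "0 < N" "\<And>i j. 0 \<le> A i j" and a: "a = best_response t A N b"
  shows "(\<Sum>j\<in>UNIV. A i j * a i powr t * b j powr t / N) = a i"
proof -
  have "(\<Sum>j\<in>UNIV. A i j * a i powr t * b j powr t / N)
      = a i powr t * ((\<Sum>j\<in>UNIV. A i j * b j powr t) / N)"
    by (simp add: sum_distrib_left sum_divide_distrib mult_ac)
  also have "\<dots> = a i powr t * a i powr (1 - t)"
    using best_response_powr[of t N A b i] assms by simp
  also have "\<dots> = a i"
    using assms by (simp add: best_response_def flip: powr_add)
  finally show ?thesis .
qed

lemma best_response_mass_le_one:
  assumes t: "0 < t" "t < 1" and A: "\<And>i j. 0 \<le> A i j" and N: "0 < N" "powr_form_bounded t A N"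
    and b: "prob_simplex b"
  shows "sum (best_response t A N b) UNIV \<le> 1"
proof -
  define u where "u = best_response t A N b"
  define U where "U = sum u UNIV"
  have u: "0 \<le> u i" for i by (simp add: u_def best_response_def)
  show ?thesis
  proof (cases "U = 0")
    case False
    then have U: "0 < U" using u by (simp add: U_def order_less_le sum_nonneg)
    have "prob_simplex (\<lambda>i. u i / U)"
      using u U by (auto simp: prob_simplex_def U_def simp flip: sum_divide_distrib)
    then have "powr_form t A (\<lambda>i. u i / U) b \<le> N"
      using N(2) b unfolding powr_form_bounded_def by blast
    text \<open>Tested against \<open>b\<close>, the normalised best response is worth \<open>N * U powr (1 - t) \<le> N\<close>.\<close>
    moreover have "powr_form t A (\<lambda>i. u i / U) b = N * U powr (1 - t)"
    proof -
      have "(\<Sum>j\<in>UNIV. A i j * b j powr t) = N * u i powr (1 - t)" for i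
        using best_response_powr[of t N A b i] t A N(1) by (simp add: u_def)
      then have "powr_form t A (\<lambda>i. u i / U) b = (\<Sum>i\<in>UNIV. (u i / U) powr t * (N * u i powr (1 - t)))"
        by (simp only: powr_form_rows)
      also have "\<dots> = N / U powr t * U"
        using u U by (simp add: U_def sum_distrib_left sum_divide_distrib powr_divide mult_ac flip: powr_add)
      also have "\<dots> = N * U powr (1 - t)"
        using U by (simp add: powr_diff)
      finally show ?thesis .
    qed
    ultimately have "U powr (1 - t) \<le> 1 powr (1 - t)" using N(1) by simp
    then have "U \<le> 1" using t by (meson not_le powr_less_mono2 diff_gt_0_iff_gt zero_le_one)
    then show ?thesis by (simp add: U_def u_def)
  qed (simp add: U_def u_def)
qed

lemma simplex_maximizer_best_response:
  assumes t: "0 < t" "t < 1" and A: "\<And>i j. 0 \<le> A i j" and N: "0 < N" "powr_form_bounded t A N"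
    and a: "prob_simplex a" and b: "prob_simplex b" and max: "powr_form t A a b = N"
  shows "a = best_response t A N b"
proof -
  define u where "u = best_response t A N b"
  have u: "0 \<le> u i" for i by (simp add: u_def best_response_def)
  have a0: "0 \<le> a i" for i using a by (simp add: prob_simplex_def)
  define gap where "gap i = t * a i + (1 - t) * u i - a i powr t * u i powr (1 - t)" for i
  have gap0: "0 \<le> gap i" for i
    using powr_weighted_mean_le[OF t a0 u] by (simp add: gap_def)
  text \<open>The AM-GM gaps sum to \<open>(1 - t) * (sum u - 1) \<le> 0\<close>, so each vanishes.\<close>
  have "(\<Sum>j\<in>UNIV. A i j * b j powr t) = N * u i powr (1 - t)" for i
    using best_response_powr[of t N A b i] t A N(1) by (simp add: u_def)
  then have "powr_form t A a b = N * (\<Sum>i\<in>UNIV. a i powr t * u i powr (1 - t))"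
    by (simp add: powr_form_rows sum_distrib_left mult_ac)
  then have "(\<Sum>i\<in>UNIV. a i powr t * u i powr (1 - t)) = 1" using max N(1) by simp
  moreover have "sum a UNIV = 1" using a by (simp add: prob_simplex_def)
  ultimately have "sum gap UNIV = (1 - t) * (sum u UNIV - 1)"
    by (simp add: gap_def sum_subtractf sum.distrib algebra_simps flip: sum_distrib_left)
  also have "\<dots> \<le> 0"
    using best_response_mass_le_one[OF t A N b] t by (simp add: u_def mult_nonneg_nonpos)
  finally have "gap i = 0" for i
    using gap0 sum_nonneg_eq_0_iff[of UNIV gap] by (simp add: order_antisym sum_nonneg)
  then have "a i = u i" for i
    using powr_weighted_mean_eq_imp_eq[OF t a0 u] by (simp add: gap_def)
  then show ?thesis by (simp add: u_def fun_eq_iff)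
qed

section \<open>Gibbs bound for \<open>\<Psi>\<^sub>1\<close>\<close>

lemma xlnx_eq: "xlnx t = t * ln t"
  by (simp add: xlnx_def)

lemma coupling_bounds:
  assumes "x \<in> couplings a b"
  shows "0 \<le> x i j" "x i j \<le> a i" "x i j \<le> b j"
proof -
  have x: "\<And>i j. 0 \<le> x i j" "\<And>i. (\<Sum>j\<in>UNIV. x i j) = a i" "\<And>j. (\<Sum>i\<in>UNIV. x i j) = b j"
    using assms by (auto simp: couplings_def)
  show "0 \<le> x i j" by (rule x(1))
  show "x i j \<le> a i" "x i j \<le> b j"
    using member_le_sum[of j UNIV "x i"] member_le_sum[of i UNIV "\<lambda>i. x i j"] x by auto
qed

lemma Psi1_obj_tilted:
  fixes A :: "'a::finite \<Rightarrow> 'a \<Rightarrow> real"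
  assumes D: "0 < D" and t: "t = (real D - 1) / real D"
    and x: "x \<in> couplings a b" and supp: "\<And>i j. 0 < x i j \<Longrightarrow> 0 < A i j"
  shows "Psi1_obj D A a b x
           = ereal (real D * (\<Sum>(i, j)\<in>UNIV. x i j * (ln (A i j * a i powr t * b j powr t) - ln (x i j))))"
proof -
  have rows: "(\<Sum>j\<in>UNIV. x i j) = a i" and cols: "(\<Sum>i\<in>UNIV. x i j) = b j" for i j
    using x by (auto simp: couplings_def)
  have cross: "cross_term (A i j) (x i j) = ereal (x i j * (ln (A i j) - ln (x i j)))" for i j
    using supp[of i j] coupling_bounds(1)[OF x, of i j] by (auto simp: cross_term_def order_le_less)
  text \<open>The entropy terms are absorbed into the cross term because \<open>D * t = D - 1\<close>
    and the marginals of \<open>x\<close> are \<open>a\<close> and \<open>b\<close>.\<close>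
  have split: "x i j * (ln (A i j * a i powr t * b j powr t) - ln (x i j))
      = x i j * (ln (A i j) - ln (x i j)) + t * (x i j * ln (a i)) + t * (x i j * ln (b j))" for i j
  proof (cases "x i j = 0")
    case False
    then have "0 < x i j" "0 < A i j" using supp coupling_bounds(1)[OF x, of i j] by force+
    moreover have "0 < a i" "0 < b j"
      using \<open>0 < x i j\<close> coupling_bounds(2,3)[OF x, of i j] by linarith+
    ultimately show ?thesis by (simp add: ln_mult ln_powr algebra_simps)
  qed simp
  define G where "G = (\<Sum>(i, j)\<in>UNIV. x i j * (ln (A i j * a i powr t * b j powr t) - ln (x i j)))"
  define C where "C = (\<Sum>(i, j)\<in>UNIV. x i j * (ln (A i j) - ln (x i j)))"
  define Ea where "Ea = (\<Sum>i\<in>UNIV. a i * ln (a i))"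
  define Eb where "Eb = (\<Sum>j\<in>UNIV. b j * ln (b j))"
  have "G = C + t * (\<Sum>i\<in>UNIV. \<Sum>j\<in>UNIV. x i j * ln (a i)) + t * (\<Sum>i\<in>UNIV. \<Sum>j\<in>UNIV. x i j * ln (b j))"
    unfolding G_def C_def split sum_UNIV_prod by (simp add: sum.distrib sum_distrib_left)
  also have "(\<Sum>i\<in>UNIV. \<Sum>j\<in>UNIV. x i j * ln (a i)) = Ea"
    by (simp add: Ea_def rows flip: sum_distrib_right)
  also have "(\<Sum>i\<in>UNIV. \<Sum>j\<in>UNIV. x i j * ln (b j)) = Eb"
    by (subst sum.swap) (simp add: Eb_def cols flip: sum_distrib_right)
  finally have "real D * G = (real D * t) * (Ea + Eb) + real D * C"
    by (simp add: algebra_simps)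
  also have "real D * t = real D - 1" using D by (simp add: t)
  finally have "real D * G = (real D - 1) * (Ea + Eb) + real D * C" .
  moreover have "(\<Sum>(i, j)\<in>UNIV. cross_term (A i j) (x i j)) = ereal C"
    by (simp add: C_def cross case_prod_beta)
  ultimately show ?thesis
    by (simp add: Psi1_obj_def xlnx_eq G_def Ea_def Eb_def)
qed

lemma Psi1_obj_eq_minus_infinity:
  assumes "0 < D" "0 < x i j" "A i j = 0"
  shows "Psi1_obj D A a b x = -\<infinity>"
proof -
  let ?c = "\<lambda>(i, j). cross_term (A i j) (x i j)"
  have "?c (i, j) = -\<infinity>" using assms by (simp add: cross_term_def)
  moreover have "(\<Sum>p\<in>UNIV - {(i, j)}. ?c p) \<noteq> \<infinity>"
    by (auto simp: sum_Pinfty cross_term_def split: if_splits)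
  ultimately have "(\<Sum>p\<in>UNIV. ?c p) = -\<infinity>"
    by (simp add: sum.remove[of UNIV "(i, j)"])
  then show ?thesis using assms(1) by (simp add: Psi1_obj_def)
qed

lemma Psi1_obj_le_powr_form:
  fixes A :: "'a::finite \<Rightarrow> 'a \<Rightarrow> real"
  assumes D: "0 < D" and t: "t = (real D - 1) / real D" and A: "\<And>i j. 0 \<le> A i j"
    and a: "prob_simplex a" and x: "x \<in> couplings a b" and finite: "Psi1_obj D A a b x \<noteq> -\<infinity>"
  shows "0 < powr_form t A a b \<and> Psi1_obj D A a b x \<le> ereal (real D * ln (powr_form t A a b))"
proof -
  have supp: "0 < A i j" if "0 < x i j" for i j
    using Psi1_obj_eq_minus_infinity[of D x i j A a b] D that finite A[of i j] by force
  define y where "y = (\<lambda>(i, j). A i j * a i powr t * b j powr t)"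
  have "sum (\<lambda>(i, j). x i j) UNIV = 1"
    using a x by (simp add: sum_UNIV_prod couplings_def prob_simplex_def)
  moreover have "0 < y (i, j)" if "0 < x i j" for i j
    using supp[OF that] coupling_bounds(2,3)[OF x, of i j] that by (simp add: y_def)
  ultimately have "0 < sum y UNIV"
    and gibbs: "(\<Sum>(i, j)\<in>UNIV. x i j * (ln (y (i, j)) - ln (x i j))) \<le> ln (sum y UNIV)"
    using gibbs_inequality[of UNIV "\<lambda>(i, j). x i j" y] coupling_bounds(1)[OF x] A
    by (auto simp: y_def case_prod_beta)
  moreover have "sum y UNIV = powr_form t A a b" by (simp add: y_def powr_form_pairs)
  ultimately show ?thesis
    using gibbs D by (simp add: Psi1_obj_tilted[OF D t x supp] y_def case_prod_beta)
qed

lemma Psi1_le_powr_form: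
  fixes A :: "'a::finite \<Rightarrow> 'a \<Rightarrow> real"
  assumes D: "0 < D" and t: "t = (real D - 1) / real D" and A: "\<And>i j. 0 \<le> A i j"
    and a: "prob_simplex a" and finite: "Psi1 D A a b \<noteq> -\<infinity>"
  shows "0 < powr_form t A a b" and "Psi1 D A a b \<le> ereal (real D * ln (powr_form t A a b))"
proof -
  obtain x where x: "x \<in> couplings a b" and "Psi1_obj D A a b x \<noteq> -\<infinity>"
    using finite by (auto simp: Psi1_def bot_ereal_def[symmetric])
  then show "0 < powr_form t A a b"
    using Psi1_obj_le_powr_form[of D t A a x b] D t A a by blast
  show "Psi1 D A a b \<le> ereal (real D * ln (powr_form t A a b))"
    unfolding Psi1_def
  proof (rule SUP_least)
    fix x assume "x \<in> couplings a b"
    then show "Psi1_obj D A a b x \<le> ereal (real D * ln (powr_form t A a b))"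
      using Psi1_obj_le_powr_form[of D t A a x b] D t A a
      by (cases "Psi1_obj D A a b x = -\<infinity>") auto
  qed
qed

lemma Psi1_ge_at_maximizer:
  fixes B :: "'a::finite \<Rightarrow> 'a \<Rightarrow> real"
  assumes D: "1 < D" and t: "t = (real D - 1) / real D"
    and B: "\<And>i j. 0 \<le> B i j" "\<And>i j. B i j = B j i"
    and N: "0 < N" "powr_form_bounded t B N"
    and a: "prob_simplex a" and b: "prob_simplex b" and max: "powr_form t B a b = N"
  shows "ereal (real D * ln N) \<le> Psi1 D B a b"
proof -
  have t01: "0 < t" "t < 1" using D by (simp_all add: t field_simps)
  have a_br: "a = best_response t B N b"
    by (rule simplex_maximizer_best_response[OF t01 B(1) N a b max])
  have b_br: "b = best_response t B N a"
    using max powr_form_commute[of B t a b] B(2)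
    by (intro simplex_maximizer_best_response[OF t01 B(1) N b a]) simp_all
  text \<open>The Gibbs coupling of the tilted weights; the fixed point equations give its marginals.\<close>
  define x where "x i j = B i j * a i powr t * b j powr t / N" for i j
  have "(\<Sum>j\<in>UNIV. x i j) = a i" for i
    using best_response_row_sum[of t N B a b i] a_br t01 N(1) B(1) by (simp add: x_def)
  moreover have "(\<Sum>i\<in>UNIV. x i j) = b j" for j
  proof -
    have "x i j = B j i * b j powr t * a i powr t / N" for i
      by (simp add: x_def B(2)[of i j] mult_ac)
    then show ?thesis
      using best_response_row_sum[of t N B b a j] b_br t01 N(1) B(1) by simp
  qed
  moreover have x0: "0 \<le> x i j" for i j using B N by (simp add: x_def)
  ultimately have x: "x \<in> couplings a b" by (simp add: couplings_def)
  have supp: "0 < B i j" if "0 < x i j" for i j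
    using that B(1)[of i j] by (auto simp: x_def order_le_less)
  have tilted: "x i j * (ln (B i j * a i powr t * b j powr t) - ln (x i j)) = x i j * ln N" for i j
  proof (cases "x i j = 0")
    case False
    then have "0 < x i j" using x0[of i j] by simp
    moreover have "B i j * a i powr t * b j powr t = N * x i j" using N(1) by (simp add: x_def)
    ultimately show ?thesis using N(1) by (simp add: ln_mult)
  qed simp
  have "Psi1_obj D B a b x
      = ereal (real D * (\<Sum>(i, j)\<in>UNIV. x i j * (ln (B i j * a i powr t * b j powr t) - ln (x i j))))"
    using Psi1_obj_tilted[of D t x a b B] D t x supp by simp
  also have "\<dots> = ereal (real D * (ln N * (\<Sum>(i, j)\<in>UNIV. x i j)))"
    by (simp only: tilted) (simp add: sum_distrib_left case_prod_beta mult.commute)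
  also have "(\<Sum>(i, j)\<in>UNIV. x i j) = 1"
    using a x by (simp add: sum_UNIV_prod couplings_def prob_simplex_def)
  finally have "Psi1_obj D B a b x = ereal (real D * ln N)" by simp
  then show ?thesis
    unfolding Psi1_def using x by (metis SUP_upper)
qed

section \<open>Maximizers of the tensor form\<close>

lemma maximizer_mass_on_decoupled_block:
  assumes t: "1/2 < t" "t < 1" and N: "0 < N" "powr_form_bounded t B N"
    and a: "prob_simplex a" and b: "prob_simplex b" and max: "powr_form t B a b = N"
    and decoupled: "\<And>k l. (k \<in> K) \<noteq> (l \<in> L) \<Longrightarrow> B k l * a k powr t * b l powr t = 0"
    and mass: "0 < sum a K"
  shows "sum a K = 1 \<and> sum b L = 1"
proof -
  let ?in = "\<lambda>S f x. if x \<in> S then f x else 0"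
  let ?out = "\<lambda>S f x. if x \<in> S then 0 else f x"
  have a0: "0 \<le> a k" and b0: "0 \<le> b l" for k l using a b by (simp_all add: prob_simplex_def)
  have mass_in: "sum (?in S f) UNIV = sum f S" for S and f :: "'a \<Rightarrow> real"
    by (simp add: sum.inter_restrict[symmetric])
  have mass_out: "sum (?out S f) UNIV = sum f UNIV - sum f S" for S and f :: "'a \<Rightarrow> real"
  proof -
    have "sum (?out S f) UNIV + sum (?in S f) UNIV = sum f UNIV"
      by (simp add: sum.distrib[symmetric] if_distrib cong: if_cong)
    then show ?thesis using mass_in by simp
  qed
  have "B k l * a k powr t * b l powr t
      = B k l * ?in K a k powr t * ?in L b l powr t + B k l * ?out K a k powr t * ?out L b l powr t" for k l
    using decoupled[of k l] by (cases "k \<in> K"; cases "l \<in> L") simp_all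
  then have "N = powr_form t B (?in K a) (?in L b) + powr_form t B (?out K a) (?out L b)"
    unfolding max[symmetric] powr_form_def by (simp add: sum.distrib)
  also have "\<dots> \<le> N * sum a K powr t * sum b L powr t + N * (1 - sum a K) powr t * (1 - sum b L) powr t"
    using powr_form_le_mass[OF N(2), of "?in K a" "?in L b"] powr_form_le_mass[OF N(2), of "?out K a" "?out L b"]
      a b by (simp add: mass_in mass_out prob_simplex_def a0 b0 add_mono)
  finally have "N * 1 \<le> N * (sum a K powr t * sum b L powr t + (1 - sum a K) powr t * (1 - sum b L) powr t)"
    by (simp add: algebra_simps)
  then have "1 \<le> sum a K powr t * sum b L powr t + (1 - sum a K) powr t * (1 - sum b L) powr t"
    using N(1) mult_le_cancel_left_pos by blast
  moreover have "sum a K \<le> 1" "sum b L \<le> 1" "0 \<le> sum b L"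
    using a0 b0 a b sum_mono2[of UNIV K a] sum_mono2[of UNIV L b]
    by (auto simp: prob_simplex_def sum_nonneg)
  ultimately show ?thesis
    using powr_split_ge_one_imp_one[OF t mass] mass by (simp add: powr_mult)
qed

lemma best_response_pos_imp_pos_entry:
  assumes "\<And>l. 0 \<le> A k l" "\<And>l. 0 \<le> b l" and "0 < best_response t A N b k"
  shows "\<exists>l. 0 < A k l \<and> 0 < b l"
proof -
  have "(\<Sum>l\<in>UNIV. A k l * b l powr t) \<noteq> 0" using assms(3) by (auto simp: best_response_def)
  then obtain l where "A k l * b l powr t \<noteq> 0" by (meson sum.neutral)
  then show ?thesis using assms(1,2)[of l] by (auto simp: order_le_less)
qed

lemma maximizer_slices_coincide:
  fixes B :: "'a::finite \<Rightarrow> 'a \<Rightarrow> real"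
  assumes t: "1/2 < t" "t < 1" and B: "\<And>i j. 0 \<le> B i j" "\<And>i j. B i j = B j i"
    and N: "0 < N" "powr_form_bounded t B N"
    and a: "prob_simplex a" and b: "prob_simplex b" and max: "powr_form t B a b = N"
    and G: "\<And>k. 0 < a k \<Longrightarrow> prob_simplex (G k)" and H: "\<And>l. 0 < b l \<Longrightarrow> prob_simplex (H l)"
    and GH: "\<And>k l. 0 < a k \<Longrightarrow> 0 < b l \<Longrightarrow> 0 < B k l \<Longrightarrow> powr_form t B (G k) (H l) = N"
  shows "\<exists>g. \<forall>k. 0 < a k \<longrightarrow> G k = g"
proof -
  have t01: "0 < t" "t < 1" using t by simp_all
  have a0: "0 \<le> a k" and b0: "0 \<le> b l" for k l using a b by (simp_all add: prob_simplex_def)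
  have response: "G k = best_response t B N (H l) \<and> H l = best_response t B N (G k)"
    if "0 < a k" "0 < b l" "0 < B k l" for k l
    using simplex_maximizer_best_response[OF t01 B(1) N G[OF that(1)] H[OF that(2)] GH[OF that]]
      simplex_maximizer_best_response[OF t01 B(1) N H[OF that(2)] G[OF that(1)]]
      GH[OF that] powr_form_commute[of B t "G k" "H l"] B(2) by simp
  obtain k0 where k0: "0 < a k0"
    using a a0 by (metis prob_simplex_def order_less_le sum.neutral zero_neq_one)
  have "a = best_response t B N b"
    by (rule simplex_maximizer_best_response[OF t01 B(1) N a b max])
  then obtain l0 where l0: "0 < B k0 l0" "0 < b l0"
    using best_response_pos_imp_pos_entry[of B k0 b t N] B(1) b0 k0 by auto
  define K L where "K = {k. 0 < a k \<and> G k = G k0}" and "L = {l. 0 < b l \<and> H l = H l0}"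
  text \<open>Along a positive entry of \<open>B\<close> the slices are best responses to each other, so
    membership in \<open>K\<close> and in \<open>L\<close> agree and \<open>K \<times> L\<close> is decoupled from its complement.\<close>
  have decoupled: "B k l * a k powr t * b l powr t = 0" if "(k \<in> K) \<noteq> (l \<in> L)" for k l
  proof (rule ccontr)
    assume "B k l * a k powr t * b l powr t \<noteq> 0"
    then have kl: "0 < a k" "0 < b l" "0 < B k l"
      using a0[of k] b0[of l] B(1)[of k l] by (auto simp: order_le_less)
    have r0: "G k0 = best_response t B N (H l0)" "H l0 = best_response t B N (G k0)"
      using response[OF k0 l0(2,1)] by blast+
    have r: "G k = best_response t B N (H l)" "H l = best_response t B N (G k)"
      using response[OF kl] by blast+
    have "H l = H l0" if "G k = G k0" using r(2) r0(2) that by simp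
    moreover have "G k = G k0" if "H l = H l0" using r(1) r0(1) that by simp
    ultimately have "G k = G k0 \<longleftrightarrow> H l = H l0" by blast
    then show False using that kl by (simp add: K_def L_def)
  qed
  have "a k0 \<le> sum a K" using k0 a0 by (intro member_le_sum) (auto simp: K_def)
  then have "sum a K = 1"
    using maximizer_mass_on_decoupled_block[OF t N a b max decoupled] k0 by simp
  then have rest: "sum a (UNIV - K) = 0"
    using a sum.subset_diff[of K UNIV a] by (simp add: prob_simplex_def)
  have "k \<in> K" if "0 < a k" for k
  proof (rule ccontr)
    assume "k \<notin> K"
    then have "a k = 0" using rest a0 sum_nonneg_eq_0_iff[of "UNIV - K" a] by simp
    then show False using that by simp
  qed
  then show ?thesis by (auto simp: K_def)
qed

lemma kron_powr_form_maximal_slices: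
  fixes B :: "'a::finite \<Rightarrow> 'a \<Rightarrow> real" and \<gamma> \<delta> :: "'a \<times> 'a \<Rightarrow> real"
  assumes B: "\<And>i j. 0 \<le> B i j" and N: "0 < N" "powr_form_bounded t B N"
    and a: "prob_simplex a" and b: "prob_simplex b"
    and \<gamma>: "\<And>p. 0 \<le> \<gamma> p" "\<And>k. (\<Sum>i\<in>UNIV. \<gamma> (i, k)) = a k"
    and \<delta>: "\<And>p. 0 \<le> \<delta> p" "\<And>l. (\<Sum>j\<in>UNIV. \<delta> (j, l)) = b l"
    and big: "N * N \<le> powr_form t (kron B B) \<gamma> \<delta>"
  shows "powr_form t B a b = N"
    and "\<And>k l. 0 < a k \<Longrightarrow> 0 < b l \<Longrightarrow> 0 < B k l \<Longrightarrow>
           powr_form t B (\<lambda>i. \<gamma> (i, k) / a k) (\<lambda>j. \<delta> (j, l) / b l) = N"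
proof -
  define U where "U k l = powr_form t B (\<lambda>i. \<gamma> (i, k)) (\<lambda>j. \<delta> (j, l))" for k l
  define V where "V k l = N * a k powr t * b l powr t" for k l
  have UV: "U k l \<le> V k l" for k l
    using powr_form_le_mass[OF N(2), of "\<lambda>i. \<gamma> (i, k)" "\<lambda>j. \<delta> (j, l)"] \<gamma> \<delta>
    by (simp add: U_def V_def)
  have V: "(\<Sum>k\<in>UNIV. \<Sum>l\<in>UNIV. B k l * V k l) = N * powr_form t B a b"
    by (simp add: V_def powr_form_def sum_distrib_left mult_ac)
  have "powr_form t B a b \<le> N" using N(2) a b by (simp add: powr_form_bounded_def)
  text \<open>Both bounds must be tight: the kron form is at most \<open>N\<close> times the form of the marginals.\<close>
  have "N * N \<le> (\<Sum>k\<in>UNIV. \<Sum>l\<in>UNIV. B k l * U k l)"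
    using big by (simp add: powr_form_kron U_def)
  moreover have "(\<Sum>k\<in>UNIV. \<Sum>l\<in>UNIV. B k l * U k l) \<le> (\<Sum>k\<in>UNIV. \<Sum>l\<in>UNIV. B k l * V k l)"
    using B UV by (intro sum_mono mult_left_mono) auto
  moreover have "N * powr_form t B a b \<le> N * N"
    using N(1) \<open>powr_form t B a b \<le> N\<close> by simp
  ultimately have tight: "(\<Sum>k\<in>UNIV. \<Sum>l\<in>UNIV. B k l * U k l) = (\<Sum>k\<in>UNIV. \<Sum>l\<in>UNIV. B k l * V k l)"
    and "N * powr_form t B a b = N * N"
    using V by linarith+
  then show max: "powr_form t B a b = N" using N(1) by simp
  have gap: "B k l * (V k l - U k l) = 0" for k l
  proof -
    have nonneg: "0 \<le> B k l * (V k l - U k l)" for k l using B UV by simp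
    have "(\<Sum>k\<in>UNIV. \<Sum>l\<in>UNIV. B k l * (V k l - U k l)) = 0"
      using tight by (simp add: right_diff_distrib sum_subtractf)
    then show ?thesis
      using nonneg by (simp add: sum_nonneg_eq_0_iff sum_nonneg)
  qed
  fix k l assume kl: "0 < a k" "0 < b l" "0 < B k l"
  have "U k l = a k powr t * b l powr t * powr_form t B (\<lambda>i. \<gamma> (i, k) / a k) (\<lambda>j. \<delta> (j, l) / b l)"
    using powr_form_scale[of "a k" "b l" "\<lambda>i. \<gamma> (i, k) / a k" "\<lambda>j. \<delta> (j, l) / b l" t B] kl \<gamma> \<delta>
    by (simp add: U_def)
  moreover have "U k l = V k l" using gap[of k l] kl by simp
  ultimately show "powr_form t B (\<lambda>i. \<gamma> (i, k) / a k) (\<lambda>j. \<delta> (j, l) / b l) = N"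
    using kl by (simp add: V_def)
qed

lemma product_of_equal_slices:
  fixes \<gamma> :: "'a::finite \<times> 'a \<Rightarrow> real"
  assumes \<gamma>: "\<And>p. 0 \<le> \<gamma> p" and col: "\<And>k. (\<Sum>i\<in>UNIV. \<gamma> (i, k)) = a k"
    and row: "\<And>i. (\<Sum>k\<in>UNIV. \<gamma> (i, k)) = a i" and mass: "sum a UNIV = 1"
    and slices: "\<And>k. 0 < a k \<Longrightarrow> (\<lambda>i. \<gamma> (i, k) / a k) = g"
  shows "\<gamma> (i, k) = a i * a k"
proof -
  have slice: "\<gamma> (i, k) = a k * g i" for i k
  proof (cases "a k = 0")
    case True
    then show ?thesis using col[of k] \<gamma> sum_nonneg_eq_0_iff[of UNIV "\<lambda>i. \<gamma> (i, k)"] by simp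
  next
    case False
    then have "0 < a k" using col[of k] \<gamma> by (metis order_le_less sum_nonneg)
    then show ?thesis using fun_cong[OF slices, of k i] by (simp add: field_simps)
  qed
  have "a i = g i" using row[of i] mass by (simp add: slice flip: sum_distrib_right)
  then show ?thesis by (simp add: slice mult.commute)
qed

lemma kron_powr_form_ge_square_imp_product:
  fixes B :: "'a::finite \<Rightarrow> 'a \<Rightarrow> real" and \<gamma> \<delta> :: "'a \<times> 'a \<Rightarrow> real"
  assumes t: "1/2 < t" "t < 1" and B: "\<And>i j. 0 \<le> B i j" "\<And>i j. B i j = B j i"
    and N: "0 < N" "powr_form_bounded t B N"
    and a: "prob_simplex a" and b: "prob_simplex b"
    and \<gamma>: "\<And>p. 0 \<le> \<gamma> p" "\<And>k. (\<Sum>i\<in>UNIV. \<gamma> (i, k)) = a k" "\<And>i. (\<Sum>k\<in>UNIV. \<gamma> (i, k)) = a i"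
    and \<delta>: "\<And>p. 0 \<le> \<delta> p" "\<And>l. (\<Sum>j\<in>UNIV. \<delta> (j, l)) = b l" "\<And>j. (\<Sum>l\<in>UNIV. \<delta> (j, l)) = b j"
    and big: "N * N \<le> powr_form t (kron B B) \<gamma> \<delta>"
  shows "(\<forall>i k. \<gamma> (i, k) = a i * a k) \<and> (\<forall>j l. \<delta> (j, l) = b j * b l)"
proof -
  define G H where "G k = (\<lambda>i. \<gamma> (i, k) / a k)" and "H l = (\<lambda>j. \<delta> (j, l) / b l)" for k l
  have max: "powr_form t B a b = N"
    and GH: "\<And>k l. 0 < a k \<Longrightarrow> 0 < b l \<Longrightarrow> 0 < B k l \<Longrightarrow> powr_form t B (G k) (H l) = N"
    using kron_powr_form_maximal_slices[OF B(1) N a b \<gamma>(1,2) \<delta>(1,2) big] by (simp_all add: G_def H_def)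
  have G: "prob_simplex (G k)" if "0 < a k" for k
    using that \<gamma>(1,2) by (simp add: prob_simplex_def G_def flip: sum_divide_distrib)
  have H: "prob_simplex (H l)" if "0 < b l" for l
    using that \<delta>(1,2) by (simp add: prob_simplex_def H_def flip: sum_divide_distrib)
  obtain g where "\<forall>k. 0 < a k \<longrightarrow> G k = g"
    using maximizer_slices_coincide[of t B N a b G H] t B N a b max G H GH by blast
  moreover obtain h where "\<forall>l. 0 < b l \<longrightarrow> H l = h"
  proof -
    have "powr_form t B b a = N" using max powr_form_commute[of B t a b] B(2) by simp
    moreover have "powr_form t B (H l) (G k) = N" if "0 < b l" "0 < a k" "0 < B l k" for k l
      using GH[of k l] that powr_form_commute[of B t "G k" "H l"] B(2) by simp
    ultimately show ?thesis
      using maximizer_slices_coincide[of t B N b a H G] t B N a b H G that by blast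
  qed
  ultimately show ?thesis
    using product_of_equal_slices[OF \<gamma>, of g] product_of_equal_slices[OF \<delta>, of h] a b
    by (simp add: G_def H_def prob_simplex_def)
qed

lemma irreducible_mat_has_pos_entry:
  assumes "irreducible_mat B"
  shows "\<exists>u v. 0 < B u v"
proof -
  have "(undefined, undefined) \<in> {(u, v). 0 < B u v}\<^sup>+"
    using assms by (simp add: irreducible_mat_def)
  then show ?thesis by (induct rule: trancl_induct) auto
qed

lemma powr_form_bounded_pos:
  assumes "powr_form_bounded t A N" and "0 < A u v"
  shows "0 < N"
proof -
  have "powr_form t A (\<lambda>i. if i = u then 1 else 0) (\<lambda>j. if j = v then 1 else 0) \<le> N"
    using assms(1) by (simp add: powr_form_bounded_def prob_simplex_def)
  then show ?thesis using assms(2) by (simp add: powr_form_unit_vectors)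
qed

lemma exp_le_powr_form_if_Psi1_ge:
  fixes A :: "'a::finite \<Rightarrow> 'a \<Rightarrow> real"
  assumes D: "0 < D" and t: "t = (real D - 1) / real D" and A: "\<And>i j. 0 \<le> A i j"
    and a: "prob_simplex a" and ge: "ereal (real D * c) \<le> Psi1 D A a b"
  shows "exp c \<le> powr_form t A a b"
proof -
  have "Psi1 D A a b \<noteq> -\<infinity>" using ge by auto
  then have S: "0 < powr_form t A a b" and le: "Psi1 D A a b \<le> ereal (real D * ln (powr_form t A a b))"
    using Psi1_le_powr_form[of D t A a b] D t A a by auto
  from ge le have "ereal (real D * c) \<le> ereal (real D * ln (powr_form t A a b))" by (rule order_trans)
  then have "real D * c \<le> real D * ln (powr_form t A a b)" by simp
  then have "c \<le> ln (powr_form t A a b)" using D by simp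
  then show ?thesis using S by (simp add: ln_ge_iff)
qed

theorem lemma2:
  fixes \<Delta> :: nat
    and B :: "'q::finite \<Rightarrow> 'q \<Rightarrow> real"
    and \<alpha> \<beta> :: "'q \<Rightarrow> real"
    and \<gamma> \<delta> :: "'q \<times> 'q \<Rightarrow> real"
  assumes "\<Delta> \<ge> 3"
    and "sym_nonneg_mat B" and "irreducible_mat B" and "regular_mat B"
    and "prob_simplex \<alpha>" and "prob_simplex \<beta>"
    and "\<forall>i k. \<gamma> (i, k) \<ge> 0" and "\<forall>j l. \<delta> (j, l) \<ge> 0"
    and "\<forall>k. (\<Sum>i\<in>UNIV. \<gamma> (i, k)) = \<alpha> k"
    and "\<forall>i. (\<Sum>k\<in>UNIV. \<gamma> (i, k)) = \<alpha> i"
    and "\<forall>l. (\<Sum>j\<in>UNIV. \<delta> (j, l)) = \<beta> l"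
    and "\<forall>j. (\<Sum>l\<in>UNIV. \<delta> (j, l)) = \<beta> j"
    and "Psi1 \<Delta> (kron B B) \<gamma> \<delta> =
           2 * (SUP ab\<in>{(a', b'). prob_simplex a' \<and> prob_simplex b'}. Psi1 \<Delta> B (fst ab) (snd ab))"
  shows "(\<forall>i k. \<gamma> (i, k) = \<alpha> i * \<alpha> k) \<and> (\<forall>j l. \<delta> (j, l) = \<beta> j * \<beta> l)"
proof -
  define t where "t = (real \<Delta> - 1) / real \<Delta>"
  have t: "1/2 < t" "t < 1" using assms(1) by (simp_all add: t_def field_simps)
  have B: "\<And>i j. 0 \<le> B i j" "\<And>i j. B i j = B j i"
    using assms(2) by (simp_all add: sym_nonneg_mat_def)
  have \<gamma>: "\<And>p. 0 \<le> \<gamma> p" and \<delta>: "\<And>p. 0 \<le> \<delta> p" using assms(7,8) by auto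
  obtain a b where a: "prob_simplex a" and b: "prob_simplex b"
    and bounded: "powr_form_bounded t B (powr_form t B a b)"
    using powr_form_simplex_maximum[of t B] t by auto
  define N where "N = powr_form t B a b"
  have "0 < N"
    using irreducible_mat_has_pos_entry[OF assms(3)] powr_form_bounded_pos bounded by (auto simp: N_def)
  have "ereal (real \<Delta> * ln N) \<le> Psi1 \<Delta> B a b"
    using Psi1_ge_at_maximizer[of \<Delta> t B N a b] assms(1) t_def B \<open>0 < N\<close> bounded a b by (simp add: N_def)
  also have "\<dots> \<le> (SUP ab\<in>{(a', b'). prob_simplex a' \<and> prob_simplex b'}. Psi1 \<Delta> B (fst ab) (snd ab))"
    using a b by (intro SUP_upper2[of "(a, b)"]) auto
  finally have "ereal (real \<Delta> * (2 * ln N)) \<le> Psi1 \<Delta> (kron B B) \<gamma> \<delta>"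
    using assms(13) ereal_mult_left_mono[of _ _ 2] by (force simp: ac_simps)
  then have "exp (2 * ln N) \<le> powr_form t (kron B B) \<gamma> \<delta>"
    using assms(1,5,9,10) \<gamma> B(1)
    by (intro exp_le_powr_form_if_Psi1_ge[OF _ t_def])
      (auto simp: kron_def prob_simplex_def sum_UNIV_prod)
  moreover have "exp (2 * ln N) = N * N"
  proof -
    have "2 * ln N = ln (N * N)" using \<open>0 < N\<close> by (simp add: ln_mult)
    then show ?thesis using \<open>0 < N\<close> by simp
  qed
  ultimately have "N * N \<le> powr_form t (kron B B) \<gamma> \<delta>" by simp
  moreover have "powr_form_bounded t B N" using bounded by (simp add: N_def)
  ultimately show ?thesis
    using assms(5,6,9-12) \<open>0 < N\<close> t
    by (intro kron_powr_form_ge_square_imp_product[of t B N \<alpha> \<beta> \<gamma> \<delta>]) (simp_all add: B \<gamma> \<delta>)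
qed

end
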